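(* Assume $F$ is $K$-smooth with $\ell\in\mathrm{int}(K)$ and strongly $K$-convex with $\mu\in\mathrm{int}(K)$. Let $e\in\mathrm{int}(K)$, $L_{\max}:=\max_{c^*\in C_e}\langle c^*,\ell\rangle$, $L\ge L_{\max}$, $\mu_{\min}:=\min_{c^*\in C_e}\langle c^*,\mu\rangle$, and let $\{x^k\}$ be generated from $x^0\in\mathbb{R}^n$ by $$x^{k+1}:=\arg\min_{x\in\mathbb{R}^n}\max_{c^*\in C_e}\langle c^*,JF(x^k)(x-x^k)\rangle+\tfrac L2\|x-x^k\|^2$$ (the $K$-steepest descent method without line search), assumed not to terminate ($x^{k+1}\neq x^k$ for all $k$). Then: (i) $\{x^k\}$ converges to an efficient solution $x^*$ of $\min_K F(x)$; (ii) $\|x^{k+1}-x^*\|\le\sqrt{1-\mu_{\min}/L}\,\|x^k-x^*\|$ for all $k\ge0$.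
   Context: $K\subset\mathbb{R}^m$ closed convex pointed cone with nonempty interior; $y\preceq_K y'$ iff $y'-y\in K$. $K^*=\{c:\langle c,y\rangle\ge0\ \forall y\in K\}$; for $e\in\mathrm{int}(K)$, $C_e:=\{c^*\in K^*:\langle c^*,e\rangle=1\}$. $F:\mathbb{R}^n\to\mathbb{R}^m$ differentiable with Jacobian $JF$. Strongly $K$-convex with $\mu\in K$: $JF(x)(y-x)+\tfrac12\|y-x\|^2\mu\preceq_K F(y)-F(x)$ $\forall x,y$. $K$-smooth with $\ell\in K$: $F(y)-F(x)\preceq_K JF(x)(y-x)+\tfrac12\|y-x\|^2\ell$ $\forall x,y$. $x^*$ is efficient if there is no $x$ with $F(x)\preceq_K F(x^* )$ and $F(x)\neq F(x^* )$. *)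

theory Defs
  imports "HOL-Analysis.Analysis"
begin

definition cone_le :: "'b::real_vector set \<Rightarrow> 'b \<Rightarrow> 'b \<Rightarrow> bool" where
  "cone_le K y y' \<longleftrightarrow> y' - y \<in> K"

definition proper_cone :: "'b::euclidean_space set \<Rightarrow> bool" where
  "proper_cone K \<longleftrightarrow> closed K \<and> convex K \<and> cone K \<and> K \<inter> uminus ` K = {0} \<and> interior K \<noteq> {}"

definition dual_cone :: "'b::euclidean_space set \<Rightarrow> 'b set" where
  "dual_cone K = {c. \<forall>y\<in>K. c \<bullet> y \<ge> 0}"

definition Cset :: "'b::euclidean_space set \<Rightarrow> 'b \<Rightarrow> 'b set" where
  "Cset K e = {c \<in> dual_cone K. c \<bullet> e = 1}"

definition strongly_K_convex ::
  "'b::euclidean_space set \<Rightarrow> ('a::euclidean_space \<Rightarrow> 'b) \<Rightarrow> ('a \<Rightarrow> 'a \<Rightarrow> 'b) \<Rightarrow> 'b \<Rightarrow> bool" where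
  "strongly_K_convex K F JF \<mu> \<longleftrightarrow>
     (\<forall>x y. cone_le K (JF x (y - x) + ((norm (y - x))\<^sup>2 / 2) *\<^sub>R \<mu>) (F y - F x))"

definition K_smooth ::
  "'b::euclidean_space set \<Rightarrow> ('a::euclidean_space \<Rightarrow> 'b) \<Rightarrow> ('a \<Rightarrow> 'a \<Rightarrow> 'b) \<Rightarrow> 'b \<Rightarrow> bool" where
  "K_smooth K F JF l \<longleftrightarrow>
     (\<forall>x y. cone_le K (F y - F x) (JF x (y - x) + ((norm (y - x))\<^sup>2 / 2) *\<^sub>R l))"

definition efficient ::
  "'b::euclidean_space set \<Rightarrow> ('a \<Rightarrow> 'b) \<Rightarrow> 'a \<Rightarrow> bool" where
  "efficient K F xs \<longleftrightarrow> \<not> (\<exists>x. cone_le K (F x) (F xs) \<and> F x \<noteq> F xs)"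

end

theory Submission
  imports Defs
begin

text \<open>Scalarise with the functionals c in C_e: each c \<bullet> F is (c \<bullet> \<mu>)-strongly convex and
  L-smooth, and the step minimises the convex model max_c c \<bullet> JF (x k) _ plus L/2 |_|^2. Hence
  every c \<bullet> F decreases along the iteration, and for every z in the joint level set of x (k+1)
  the three-point inequality of this proximal step together with strong convexity gives
  L |x (k+1) - z|^2 \<le> (L - \<mu>_min) |x k - z|^2. The nested level sets are compact, so they
  share a point x*, to which the iterates then converge at the stated rate. A point dominating x*
  lies in all level sets as well, so the iterates also converge to it; hence x* is efficient.\<close>

lemma dual_cone_inner_ge_norm:
  assumes "v \<in> interior K"
  obtains r where "r > 0" "\<And>c. c \<in> dual_cone K \<Longrightarrow> r * norm c \<le> c \<bullet> v"
proof -
  obtain r where r: "r > 0" "cball v r \<subseteq> K"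
    using assms mem_interior_cball by blast
  have "r * norm c \<le> c \<bullet> v" if c: "c \<in> dual_cone K" for c
  proof (cases "c = 0")
    case False
    define y where "y = v - (r / norm c) *\<^sub>R c"
    have "y \<in> K"
      using r False by (auto simp: y_def dist_norm)
    then have "0 \<le> c \<bullet> y"
      using c by (auto simp: dual_cone_def)
    also have "c \<bullet> y = c \<bullet> v - r * norm c"
      using False by (simp add: y_def inner_diff_right power2_norm_eq_inner[symmetric] power2_eq_square)
    finally show ?thesis by simp
  qed simp
  with r(1) show thesis by (rule that)
qed

lemma cone_le_inner_mono:
  assumes "c \<in> dual_cone K" and "cone_le K y y'"
  shows "c \<bullet> y \<le> c \<bullet> y'"
  using assms by (auto simp: dual_cone_def cone_le_def inner_diff_right)

lemma dual_cone_separates: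
  fixes K :: "'b::euclidean_space set"
  assumes "closed K" "convex K" "cone K" "0 \<in> K" and "p \<notin> K"
  obtains a where "a \<in> dual_cone K" "a \<bullet> p < 0"
proof -
  obtain a b where ab: "a \<bullet> p < b" "\<And>y. y \<in> K \<Longrightarrow> b < a \<bullet> y"
    using separating_hyperplane_closed_point[OF assms(2,1,5)] by blast
  have b: "b < 0"
    using ab(2)[OF \<open>0 \<in> K\<close>] by simp
  have "a \<in> dual_cone K"
    unfolding dual_cone_def
  proof (intro CollectI ballI)
    fix y assume y: "y \<in> K"
    show "0 \<le> a \<bullet> y"
    proof (rule ccontr)
      assume "\<not> 0 \<le> a \<bullet> y"
      \<comment> \<open>then the multiple (b / a \<bullet> y) y of y lies in K on the hyperplane a \<bullet> _ = b\<close>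
      then have "(b / (a \<bullet> y)) *\<^sub>R y \<in> K"
        using b y \<open>cone K\<close> by (auto simp: cone_def divide_nonpos_neg)
      then have "b < b"
        using ab(2) \<open>\<not> 0 \<le> a \<bullet> y\<close> by fastforce
      then show False by simp
    qed
  qed
  with ab b show thesis
    using that by fastforce
qed

lemma Cset_subset_dual_cone: "Cset K e \<subseteq> dual_cone K"
  by (auto simp: Cset_def)

lemma Cset_nonempty:
  assumes "proper_cone K" and e: "e \<in> interior K"
  shows "Cset K e \<noteq> {}"
proof -
  have K: "closed K" "convex K" "cone K" and pointed: "K \<inter> uminus ` K = {0}"
    using assms(1) by (auto simp: proper_cone_def)
  have "-e \<notin> K"
  proof
    assume "-e \<in> K"
    then have "e \<in> K \<inter> uminus ` K"
      using e interior_subset by (force intro: image_eqI[of e uminus "-e"])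
    then have "0 \<in> interior K"
      using pointed e by auto
    then obtain r where r: "r > 0" "cball 0 r \<subseteq> K"
      using mem_interior_cball by blast
    obtain b :: 'a where b: "b \<in> Basis"
      using nonempty_Basis by blast
    have "r *\<^sub>R b \<in> K" "- (r *\<^sub>R b) \<in> K"
      using r b by (auto simp: subset_iff)
    then have "r *\<^sub>R b \<in> K \<inter> uminus ` K"
      by (force intro: image_eqI[of _ uminus "- (r *\<^sub>R b)"])
    with pointed r b show False
      by (auto simp: nonzero_Basis)
  qed
  moreover have "0 \<in> K"
    using pointed by blast
  ultimately obtain a where a: "a \<in> dual_cone K" "a \<bullet> (-e) < 0"
    using dual_cone_separates[OF K] by blast
  then have "(1 / (a \<bullet> e)) *\<^sub>R a \<in> Cset K e"
    by (auto simp: Cset_def dual_cone_def)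
  then show ?thesis by blast
qed

lemma bounded_Cset:
  assumes "e \<in> interior K"
  shows "bounded (Cset K e)"
proof -
  obtain r where r: "r > 0" "\<And>c. c \<in> dual_cone K \<Longrightarrow> r * norm c \<le> c \<bullet> e"
    using dual_cone_inner_ge_norm[OF assms] by blast
  have "norm c \<le> 1 / r" if "c \<in> Cset K e" for c
  proof -
    have "r * norm c \<le> 1"
      using r(2)[of c] that by (simp add: Cset_def)
    then show ?thesis
      using r(1) by (simp add: field_simps)
  qed
  then show ?thesis
    unfolding bounded_iff by blast
qed

lemma bounded_Cset_inner:
  assumes "e \<in> interior K"
  shows "bounded ((\<lambda>c. c \<bullet> v) ` Cset K e)"
  by (rule bounded_linear_image[OF bounded_Cset[OF assms] bounded_linear_inner_left])

lemma Cset_INF_inner_pos: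
  assumes "proper_cone K" "e \<in> interior K" "v \<in> interior K"
  shows "0 < (INF c\<in>Cset K e. c \<bullet> v)"
proof -
  obtain r where r: "r > 0" "\<And>c. c \<in> dual_cone K \<Longrightarrow> r * norm c \<le> c \<bullet> v"
    using dual_cone_inner_ge_norm[OF assms(3)] by blast
  have "e \<noteq> 0"
    using Cset_nonempty[OF assms(1,2)] by (auto simp: Cset_def)
  have "r / norm e \<le> c \<bullet> v" if c: "c \<in> Cset K e" for c
  proof -
    have "1 \<le> norm c * norm e"
      using c norm_cauchy_schwarz[of c e] by (simp add: Cset_def)
    then have "1 / norm e \<le> norm c"
      using \<open>e \<noteq> 0\<close> by (simp add: field_simps)
    then have "r / norm e \<le> r * norm c"
      using r(1) mult_left_mono by fastforce
    also have "\<dots> \<le> c \<bullet> v"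
      using r(2) c by (simp add: Cset_def)
    finally show ?thesis .
  qed
  then have "r / norm e \<le> (INF c\<in>Cset K e. c \<bullet> v)"
    by (intro cINF_greatest Cset_nonempty assms)
  moreover have "0 < r / norm e"
    using r(1) \<open>e \<noteq> 0\<close> by simp
  ultimately show ?thesis
    by linarith
qed

lemma strongly_K_convex_inner:
  assumes "strongly_K_convex K F JF \<mu>" "c \<in> dual_cone K"
  shows "c \<bullet> JF x (y - x) + (norm (y - x))\<^sup>2 / 2 * (c \<bullet> \<mu>) \<le> c \<bullet> (F y - F x)"
proof -
  have "cone_le K (JF x (y - x) + ((norm (y - x))\<^sup>2 / 2) *\<^sub>R \<mu>) (F y - F x)"
    using assms(1) by (simp add: strongly_K_convex_def)
  from cone_le_inner_mono[OF assms(2) this] show ?thesis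
    by (simp add: inner_add_right)
qed

lemma K_smooth_inner:
  assumes "K_smooth K F JF l" "c \<in> dual_cone K"
  shows "c \<bullet> (F y - F x) \<le> c \<bullet> JF x (y - x) + (norm (y - x))\<^sup>2 / 2 * (c \<bullet> l)"
proof -
  have "cone_le K (F y - F x) (JF x (y - x) + ((norm (y - x))\<^sup>2 / 2) *\<^sub>R l)"
    using assms(1) by (simp add: K_smooth_def)
  from cone_le_inner_mono[OF assms(2) this] show ?thesis
    by (simp add: inner_add_right)
qed

lemma strongly_K_convex_K_smooth_inner_le:
  fixes F :: "'a::euclidean_space \<Rightarrow> 'b::euclidean_space"
  assumes "strongly_K_convex K F JF \<mu>" "K_smooth K F JF l" "c \<in> dual_cone K"
  shows "c \<bullet> \<mu> \<le> c \<bullet> l"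
proof -
  obtain b :: 'a where "b \<in> Basis"
    using nonempty_Basis by blast
  then show ?thesis
    using strongly_K_convex_inner[OF assms(1,3), of 0 b] K_smooth_inner[OF assms(2,3), of b 0]
    by simp
qed

lemma convex_on_SUP_inner_linear:
  assumes "linear A" "C \<noteq> {}" "\<And>v. bdd_above ((\<lambda>c. c \<bullet> A v) ` C)"
  shows "convex_on UNIV (\<lambda>v. SUP c\<in>C. c \<bullet> A v)"
proof
  fix t :: real and u v
  assume t: "0 < t" "t < 1"
  show "(SUP c\<in>C. c \<bullet> A ((1 - t) *\<^sub>R u + t *\<^sub>R v))
        \<le> (1 - t) * (SUP c\<in>C. c \<bullet> A u) + t * (SUP c\<in>C. c \<bullet> A v)"
  proof (rule cSUP_least[OF assms(2)])
    fix c assume c: "c \<in> C"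
    have "c \<bullet> A ((1 - t) *\<^sub>R u + t *\<^sub>R v) = (1 - t) * (c \<bullet> A u) + t * (c \<bullet> A v)"
      using assms(1) by (simp add: linear_add linear_scale inner_add_right)
    also have "\<dots> \<le> (1 - t) * (SUP c\<in>C. c \<bullet> A u) + t * (SUP c\<in>C. c \<bullet> A v)"
      using t c by (intro add_mono mult_left_mono cSUP_upper assms(3)) auto
    finally show "c \<bullet> A ((1 - t) *\<^sub>R u + t *\<^sub>R v) \<le> \<dots>" .
  qed
qed simp

lemma norm_convex_combination_sq:
  fixes u v :: "'a::real_inner"
  shows "(norm ((1 - t) *\<^sub>R u + t *\<^sub>R v))\<^sup>2
    = (1 - t) * (norm u)\<^sup>2 + t * (norm v)\<^sup>2 - t * (1 - t) * (norm (v - u))\<^sup>2"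
  by (simp add: power2_norm_eq_inner inner_add_left inner_add_right inner_diff_left
      inner_diff_right inner_commute algebra_simps)

text \<open>A minimiser d of the strongly convex function \<phi> + L/2 |_|^2 undercuts its value at
  any w by L/2 |w - d|^2. No sign condition on L is needed, since only convex combinations of
  d and w are compared with d.\<close>
lemma prox_three_point:
  fixes \<phi> :: "'a::real_inner \<Rightarrow> real"
  assumes "convex_on UNIV \<phi>"
    and min: "\<And>w. \<phi> d + L / 2 * (norm d)\<^sup>2 \<le> \<phi> w + L / 2 * (norm w)\<^sup>2"
  shows "\<phi> d + L / 2 * (norm d)\<^sup>2 + L / 2 * (norm (w - d))\<^sup>2 \<le> \<phi> w + L / 2 * (norm w)\<^sup>2"
proof -
  define \<psi> where "\<psi> v = \<phi> v + L / 2 * (norm v)\<^sup>2" for v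
  define a where "a = (norm (w - d))\<^sup>2"
  have pos: "0 \<le> \<psi> w - \<psi> d - L / 2 * (1 - t) * a" if t: "0 < t" "t < 1" for t
  proof -
    have "\<psi> d \<le> \<psi> ((1 - t) *\<^sub>R d + t *\<^sub>R w)"
      using min by (simp add: \<psi>_def)
    also have "\<dots> = \<phi> ((1 - t) *\<^sub>R d + t *\<^sub>R w)
        + L / 2 * ((1 - t) * (norm d)\<^sup>2 + t * (norm w)\<^sup>2 - t * (1 - t) * a)"
      by (simp only: \<psi>_def a_def norm_convex_combination_sq)
    also have "\<dots> \<le> (1 - t) * \<psi> d + t * \<psi> w - L / 2 * t * (1 - t) * a"
      using convex_onD[OF assms(1), of t d w] t
      unfolding \<psi>_def by (simp add: field_simps)
    finally have "0 \<le> t * (\<psi> w - \<psi> d - L / 2 * (1 - t) * a)"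
      by (simp add: algebra_simps)
    with t show ?thesis
      by (simp add: zero_le_mult_iff)
  qed
  have "0 \<le> \<psi> w - \<psi> d - L / 2 * (1 - 0) * a"
  proof (intro tendsto_lowerbound[where F = "at_right 0"])
    show "((\<lambda>t. \<psi> w - \<psi> d - L / 2 * (1 - t) * a) \<longlongrightarrow> \<psi> w - \<psi> d - L / 2 * (1 - 0) * a) (at_right 0)"
      by (intro tendsto_intros)
    show "\<forall>\<^sub>F t in at_right 0. 0 \<le> \<psi> w - \<psi> d - L / 2 * (1 - t) * a"
      unfolding eventually_at_right_field using pos by (intro exI[of _ 1]) auto
  qed simp
  then show ?thesis
    by (simp add: \<psi>_def a_def)
qed

lemma bounded_sublevel_quadratic_growth:
  fixes f :: "'a::real_normed_vector \<Rightarrow> real"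
  assumes "bounded_linear D" "a > 0"
    and growth: "\<And>z. D (z - y) + a / 2 * (norm (z - y))\<^sup>2 \<le> f z - f y"
  shows "bounded {z. f z \<le> f y}"
proof -
  obtain B where B: "B > 0" "\<And>v. norm (D v) \<le> norm v * B"
    using bounded_linear.pos_bounded[OF assms(1)] by blast
  have "a / 2 * norm (z - y) \<le> B" if "f z \<le> f y" "z \<noteq> y" for z
  proof -
    have "a / 2 * (norm (z - y))\<^sup>2 \<le> - D (z - y)"
      using growth[of z] that(1) by simp
    also have "\<dots> \<le> norm (z - y) * B"
      using B(2)[of "z - y"] by simp
    finally have "norm (z - y) * (a / 2 * norm (z - y)) \<le> norm (z - y) * B"
      by (simp add: power2_eq_square algebra_simps)
    then show ?thesis
      by (rule mult_left_le_imp_le) (use that(2) in simp)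
  qed
  then have "norm (z - y) \<le> 2 * B / a" if "f z \<le> f y" for z
    using that assms(2) B(1) by (cases "z = y") (auto simp: field_simps)
  then show ?thesis
    by (intro bounded_subset[OF bounded_cball[of y "2 * B / a"]]) (auto simp: dist_norm norm_minus_commute)
qed

lemma LIMSEQ_dist_contraction:
  fixes x :: "nat \<Rightarrow> 'a::metric_space"
  assumes "0 \<le> q" "q < 1" and contr: "\<And>k. dist (x (Suc k)) z \<le> q * dist (x k) z"
  shows "x \<longlonglongrightarrow> z"
proof -
  have bound: "dist (x k) z \<le> q ^ k * dist (x 0) z" for k
  proof (induction k)
    case (Suc k)
    have "dist (x (Suc k)) z \<le> q * (q ^ k * dist (x 0) z)"
      using contr[of k] mult_left_mono[OF Suc \<open>0 \<le> q\<close>] by (rule order_trans)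
    then show ?case
      by (simp add: mult.assoc)
  qed simp
  have "(\<lambda>k. q ^ k * dist (x 0) z) \<longlonglongrightarrow> 0"
    by (intro tendsto_mult_left_zero LIMSEQ_power_zero) (use assms(1,2) in simp)
  moreover have "\<forall>\<^sub>F k in sequentially. norm (dist (x k) z) \<le> q ^ k * dist (x 0) z"
    using bound by (intro always_eventually allI) simp
  ultimately have "(\<lambda>k. dist (x k) z) \<longlonglongrightarrow> 0"
    by (rule Lim_null_comparison[rotated])
  then show ?thesis
    by (subst tendsto_dist_iff)
qed

locale K_steepest_descent =
  fixes K :: "'b::euclidean_space set"
    and F :: "'a::euclidean_space \<Rightarrow> 'b"
    and JF :: "'a \<Rightarrow> 'a \<Rightarrow> 'b"
    and \<mu> l e :: 'b
    and L :: real
    and x :: "nat \<Rightarrow> 'a"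
  assumes K: "proper_cone K"
    and deriv: "\<And>z. (F has_derivative JF z) (at z)"
    and smooth: "K_smooth K F JF l"
    and sconv: "strongly_K_convex K F JF \<mu>" and mu: "\<mu> \<in> interior K"
    and e: "e \<in> interior K"
    and L: "L \<ge> (SUP c\<in>Cset K e. c \<bullet> l)"
    and step: "\<And>k z.
      (SUP c\<in>Cset K e. c \<bullet> JF (x k) (x (Suc k) - x k)) + L / 2 * (norm (x (Suc k) - x k))\<^sup>2
      \<le> (SUP c\<in>Cset K e. c \<bullet> JF (x k) (z - x k)) + L / 2 * (norm (z - x k))\<^sup>2"
begin

definition lin_model :: "nat \<Rightarrow> 'a \<Rightarrow> real"
  where "lin_model k v = (SUP c\<in>Cset K e. c \<bullet> JF (x k) v)"

definition mu_min :: real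
  where "mu_min = (INF c\<in>Cset K e. c \<bullet> \<mu>)"

definition level_set :: "nat \<Rightarrow> 'a set"
  where "level_set k = {z. \<forall>c\<in>Cset K e. c \<bullet> F z \<le> c \<bullet> F (x k)}"

lemma linear_JF: "linear (JF z)"
  using has_derivative_linear[OF deriv] .

lemma inner_le_lin_model: "c \<in> Cset K e \<Longrightarrow> c \<bullet> JF (x k) v \<le> lin_model k v"
  unfolding lin_model_def by (intro cSUP_upper bounded_imp_bdd_above bounded_Cset_inner e)

lemma lin_model_0: "lin_model k 0 = 0"
  using Cset_nonempty[OF K e] by (simp add: lin_model_def linear_0[OF linear_JF])

lemma convex_lin_model: "convex_on UNIV (lin_model k)"
  unfolding lin_model_def[abs_def]
  by (intro convex_on_SUP_inner_linear linear_JF Cset_nonempty K e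
      bounded_imp_bdd_above bounded_Cset_inner)

lemma inner_l_le_L:
  assumes "c \<in> Cset K e"
  shows "c \<bullet> l \<le> L"
proof -
  have "c \<bullet> l \<le> (SUP c\<in>Cset K e. c \<bullet> l)"
    by (intro cSUP_upper assms bounded_imp_bdd_above bounded_Cset_inner e)
  with L show ?thesis
    by linarith
qed

lemma mu_min_le_inner: "c \<in> Cset K e \<Longrightarrow> mu_min \<le> c \<bullet> \<mu>"
  unfolding mu_min_def by (intro cINF_lower bounded_imp_bdd_below bounded_Cset_inner e)

lemma mu_min_pos: "0 < mu_min"
  unfolding mu_min_def by (rule Cset_INF_inner_pos[OF K e mu])

lemma mu_min_le_L: "mu_min \<le> L"
proof -
  obtain c where c: "c \<in> Cset K e"
    using Cset_nonempty[OF K e] by blast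
  have "c \<bullet> \<mu> \<le> c \<bullet> l"
    using c Cset_subset_dual_cone by (intro strongly_K_convex_K_smooth_inner_le[OF sconv smooth]) auto
  then show ?thesis
    using mu_min_le_inner[OF c] inner_l_le_L[OF c] by linarith
qed

lemma L_pos: "0 < L"
  using mu_min_pos mu_min_le_L by linarith

lemma step_three_point:
  "lin_model k (x (Suc k) - x k) + L / 2 * (norm (x (Suc k) - x k))\<^sup>2
     + L / 2 * (norm (w - (x (Suc k) - x k)))\<^sup>2
   \<le> lin_model k w + L / 2 * (norm w)\<^sup>2"
  by (rule prox_three_point[OF convex_lin_model])
    (use step[of k "x k + _"] in \<open>simp add: lin_model_def\<close>)

lemma inner_F_step_le:
  assumes "c \<in> Cset K e"
  shows "c \<bullet> F (x (Suc k)) - c \<bullet> F (x k)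
    \<le> lin_model k (x (Suc k) - x k) + L / 2 * (norm (x (Suc k) - x k))\<^sup>2"
proof -
  let ?d = "x (Suc k) - x k"
  have "c \<bullet> F (x (Suc k)) - c \<bullet> F (x k) \<le> c \<bullet> JF (x k) ?d + (norm ?d)\<^sup>2 / 2 * (c \<bullet> l)"
    using K_smooth_inner[OF smooth] assms Cset_subset_dual_cone by (force simp: inner_diff_right)
  also have "\<dots> \<le> lin_model k ?d + L / 2 * (norm ?d)\<^sup>2"
    using inner_le_lin_model[OF assms, of k ?d]
      mult_left_mono[OF inner_l_le_L[OF assms], of "(norm ?d)\<^sup>2 / 2"]
    by (simp add: algebra_simps)
  finally show ?thesis .
qed

lemma inner_F_descent: "c \<in> Cset K e \<Longrightarrow> c \<bullet> F (x (Suc k)) \<le> c \<bullet> F (x k)"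
  using inner_F_step_le[of c k] step[of k "x k"] by (simp add: lin_model_def[symmetric] lin_model_0)

lemma iterate_in_level_set: "x k \<in> level_set k"
  by (simp add: level_set_def)

lemma level_set_antimono: "k \<le> j \<Longrightarrow> level_set j \<subseteq> level_set k"
  by (rule lift_Suc_antimono_le[of level_set])
    (force simp: level_set_def intro: order_trans inner_F_descent)

lemma closed_level_set: "closed (level_set k)"
proof -
  have "continuous_on UNIV F"
    using has_derivative_continuous[OF deriv] by (simp add: continuous_at_imp_continuous_on)
  then have "closed {z. c \<bullet> F z \<le> c \<bullet> F (x k)}" for c
    by (intro closed_Collect_le continuous_intros)
  moreover have "level_set k = (\<Inter>c\<in>Cset K e. {z. c \<bullet> F z \<le> c \<bullet> F (x k)})"
    by (auto simp: level_set_def)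
  ultimately show ?thesis
    by auto
qed

lemma bounded_level_set: "bounded (level_set k)"
proof -
  obtain c where c: "c \<in> Cset K e"
    using Cset_nonempty[OF K e] by blast
  have "bounded {z. c \<bullet> F z \<le> c \<bullet> F (x k)}"
  proof (rule bounded_sublevel_quadratic_growth)
    show "bounded_linear (\<lambda>v. c \<bullet> JF (x k) v)"
      using has_derivative_bounded_linear[OF deriv]
      by (rule bounded_linear_compose[OF bounded_linear_inner_right])
    show "0 < c \<bullet> \<mu>"
      using mu_min_pos mu_min_le_inner[OF c] by linarith
    show "c \<bullet> JF (x k) (z - x k) + c \<bullet> \<mu> / 2 * (norm (z - x k))\<^sup>2 \<le> c \<bullet> F z - c \<bullet> F (x k)" for z
      using strongly_K_convex_inner[OF sconv, of c] c Cset_subset_dual_cone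
      by (force simp: inner_diff_right algebra_simps)
  qed
  moreover have "level_set k \<subseteq> {z. c \<bullet> F z \<le> c \<bullet> F (x k)}"
    using c by (auto simp: level_set_def)
  ultimately show ?thesis
    by (rule bounded_subset)
qed

lemma sq_dist_step_level_set:
  assumes "z \<in> level_set (Suc k)"
  shows "L * (dist (x (Suc k)) z)\<^sup>2 \<le> (L - mu_min) * (dist (x k) z)\<^sup>2"
proof -
  define d where "d = x (Suc k) - x k"
  define w where "w = z - x k"
  have "c \<bullet> JF (x k) w \<le> lin_model k d + L / 2 * (norm d)\<^sup>2 - mu_min / 2 * (norm w)\<^sup>2"
    if c: "c \<in> Cset K e" for c
  proof -
    have "c \<bullet> JF (x k) w + (norm w)\<^sup>2 / 2 * (c \<bullet> \<mu>) \<le> c \<bullet> F z - c \<bullet> F (x k)"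
      using strongly_K_convex_inner[OF sconv, of c "x k" z] c Cset_subset_dual_cone
      by (auto simp: w_def inner_diff_right)
    moreover have "c \<bullet> F z \<le> c \<bullet> F (x (Suc k))"
      using assms c by (simp add: level_set_def)
    moreover have "c \<bullet> F (x (Suc k)) - c \<bullet> F (x k) \<le> lin_model k d + L / 2 * (norm d)\<^sup>2"
      using inner_F_step_le[OF c] by (simp add: d_def)
    moreover have "mu_min / 2 * (norm w)\<^sup>2 \<le> (norm w)\<^sup>2 / 2 * (c \<bullet> \<mu>)"
      using mult_left_mono[OF mu_min_le_inner[OF c], of "(norm w)\<^sup>2 / 2"] by (simp add: mult.commute)
    ultimately show ?thesis
      by linarith
  qed
  then have "lin_model k w \<le> lin_model k d + L / 2 * (norm d)\<^sup>2 - mu_min / 2 * (norm w)\<^sup>2"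
    unfolding lin_model_def[of k w] by (intro cSUP_least Cset_nonempty K e)
  moreover have "lin_model k d + L / 2 * (norm d)\<^sup>2 + L / 2 * (norm (w - d))\<^sup>2
      \<le> lin_model k w + L / 2 * (norm w)\<^sup>2"
    using step_three_point[of k w] by (simp add: d_def)
  moreover have "w - d = z - x (Suc k)"
    by (simp add: w_def d_def)
  ultimately have "L * (norm (z - x (Suc k)))\<^sup>2 \<le> (L - mu_min) * (norm w)\<^sup>2"
    by (simp add: algebra_simps)
  then show ?thesis
    by (simp add: dist_norm w_def norm_minus_commute)
qed

lemma dist_step_level_set:
  assumes "z \<in> level_set (Suc k)"
  shows "dist (x (Suc k)) z \<le> sqrt (1 - mu_min / L) * dist (x k) z"
proof -
  have "(dist (x (Suc k)) z)\<^sup>2 \<le> (1 - mu_min / L) * (dist (x k) z)\<^sup>2"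
    using sq_dist_step_level_set[OF assms] L_pos by (simp add: field_simps)
  then have "dist (x (Suc k)) z \<le> sqrt ((1 - mu_min / L) * (dist (x k) z)\<^sup>2)"
    by (rule real_le_rsqrt)
  then show ?thesis
    by (simp add: real_sqrt_mult)
qed

lemma LIMSEQ_level_set_point:
  assumes "\<And>k. z \<in> level_set k"
  shows "x \<longlonglongrightarrow> z"
proof (rule LIMSEQ_dist_contraction)
  show "0 \<le> sqrt (1 - mu_min / L)"
    using mu_min_le_L L_pos by simp
  show "sqrt (1 - mu_min / L) < 1"
    using mu_min_pos L_pos by simp
  show "dist (x (Suc k)) z \<le> sqrt (1 - mu_min / L) * dist (x k) z" for k
    using dist_step_level_set assms by blast
qed

lemma efficient_level_set_point:
  assumes xs: "\<And>k. xs \<in> level_set k"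
  shows "efficient K F xs"
  unfolding efficient_def
proof
  assume "\<exists>z. cone_le K (F z) (F xs) \<and> F z \<noteq> F xs"
  then obtain z where z: "cone_le K (F z) (F xs)" "F z \<noteq> F xs"
    by blast
  have "z \<in> level_set k" for k
    unfolding level_set_def
  proof (intro CollectI ballI)
    fix c assume c: "c \<in> Cset K e"
    have "c \<bullet> F z \<le> c \<bullet> F xs"
      using cone_le_inner_mono[OF _ z(1)] c Cset_subset_dual_cone by blast
    also have "\<dots> \<le> c \<bullet> F (x k)"
      using xs[of k] c by (simp add: level_set_def)
    finally show "c \<bullet> F z \<le> c \<bullet> F (x k)" .
  qed
  then have "x \<longlonglongrightarrow> z"
    by (rule LIMSEQ_level_set_point)
  then have "z = xs"
    using LIMSEQ_level_set_point[OF xs] by (rule LIMSEQ_unique)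
  with z(2) show False
    by simp
qed

end

theorem lemma4p1:
  fixes K :: "'b::euclidean_space set"
    and F :: "'a::euclidean_space \<Rightarrow> 'b"
    and JF :: "'a \<Rightarrow> 'a \<Rightarrow> 'b"
    and l \<mu> e :: 'b
    and L :: real
    and x :: "nat \<Rightarrow> 'a"
  assumes K: "proper_cone K"
    and deriv: "\<And>z. (F has_derivative JF z) (at z)"
    and smooth: "K_smooth K F JF l" and ell: "l \<in> interior K"
    and sconv: "strongly_K_convex K F JF \<mu>" and mu: "\<mu> \<in> interior K"
    and e: "e \<in> interior K"
    and L: "L \<ge> (SUP c\<in>Cset K e. c \<bullet> l)"
    and step: "\<And>k z.
      (SUP c\<in>Cset K e. c \<bullet> JF (x k) (x (Suc k) - x k)) + L / 2 * (norm (x (Suc k) - x k))\<^sup>2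
      \<le> (SUP c\<in>Cset K e. c \<bullet> JF (x k) (z - x k)) + L / 2 * (norm (z - x k))\<^sup>2"
    and nonterm: "\<And>k. x (Suc k) \<noteq> x k"
  shows "\<exists>xs. x \<longlonglongrightarrow> xs \<and> efficient K F xs \<and>
           (\<forall>k. norm (x (Suc k) - xs)
                  \<le> sqrt (1 - (INF c\<in>Cset K e. c \<bullet> \<mu>) / L) * norm (x k - xs))"
proof -
  interpret K_steepest_descent K F JF \<mu> l e L x
    using K deriv smooth sconv mu e L step by unfold_locales
  obtain xs where xs: "\<And>k. xs \<in> level_set k"
    using bounded_closed_nest[of level_set] closed_level_set iterate_in_level_set
      level_set_antimono bounded_level_set by blast
  have "norm (x (Suc k) - xs) \<le> sqrt (1 - (INF c\<in>Cset K e. c \<bullet> \<mu>) / L) * norm (x k - xs)" for k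
    using dist_step_level_set[OF xs] by (simp add: dist_norm mu_min_def)
  then show ?thesis
    using LIMSEQ_level_set_point[OF xs] efficient_level_set_point[OF xs] by blast
qed

end
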